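(* There is no circulant weighing matrix $CW(143,81)$.
   Context: A circulant weighing matrix $CW(n,k)$ is an $n\times n$ circulant matrix $W$ (each row after the first is the right cyclic shift of the previous row) with all entries in $\{0,1,-1\}$ such that $WW^T=kI_n$. *)

theory Defs
  imports Main
begin

text \<open>An n x n matrix with integer entries is represented as a function
  nat => nat => int, with indices in {0..<n}.\<close>

definition circulant :: "nat \<Rightarrow> (nat \<Rightarrow> nat \<Rightarrow> int) \<Rightarrow> bool" where
  "circulant n W \<longleftrightarrow> (\<forall>i<n. \<forall>j<n. W i j = W 0 ((j + n - i) mod n))"

definition circulant_weighing_matrix :: "nat \<Rightarrow> nat \<Rightarrow> (nat \<Rightarrow> nat \<Rightarrow> int) \<Rightarrow> bool" where
  "circulant_weighing_matrix n k W \<longleftrightarrow>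
     circulant n W \<and>
     (\<forall>i<n. \<forall>j<n. W i j \<in> {0, 1, -1}) \<and>
     (\<forall>i<n. \<forall>j<n. (\<Sum>l<n. W i l * W j l) = (if i = j then int k else 0))"

end

theory Submission
  imports Defs "HOL-Library.Poly_Mapping" "HOL-Library.Numeral_Type"
begin

text \<open>
  The first row of a CW(143, 81) is an element a of the group ring Z[Z/143] with
  a a* = 81 = 3^4, where a* is the image of a under x |-> -x. The map phi induced by
  x |-> 3 x on group elements is a ring endomorphism of finite order that lifts the Frobenius
  Y |-> Y^3 modulo 3; a 3-adic lifting argument gives phi(a) = a w modulo 3^4, and comparing
  norms then shows that 3 is a multiplier: phi(a) = +-g a for a group element g. Since 3 has odd order 15 modulo 143,
  a translate of the row is invariant under x |-> 3 x, i.e. constant on the 15 orbits of that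
  map. Summing over the cosets of the subgroups of order 11 and 13 turns the autocorrelation
  conditions into a small system of integer equations in the 15 orbit values, which has no
  solution with values in {-1, 0, 1}.
\<close>

section \<open>Congruences modulo powers of 3\<close>

lemma dvd_power_diff:
  fixes p x y :: "'a::comm_ring_1"
  assumes "p dvd x - y"
  shows "p dvd x ^ n - y ^ n"
  using assms by (rule dvd_trans) (simp add: power_diff_sumr2)

lemma power3_dvd_cube_diff:
  fixes x y :: "'a::comm_ring_1"
  assumes "3 ^ k dvd x - y" and "k \<ge> 1"
  shows "3 ^ (k + 1) dvd x ^ 3 - y ^ 3"
proof -
  obtain t where x: "x = y + 3 ^ k * t"
    using assms(1) by (auto elim!: dvdE simp: algebra_simps)
  obtain k' where k: "k = Suc k'"
    using assms(2) by (cases k) auto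
  define q :: 'a where "q = 3 ^ k'"
  have "x ^ 3 - y ^ 3 = 3 ^ (k + 1) * (y ^ 2 * t + 3 * q * y * t ^ 2 + 3 * q ^ 2 * t ^ 3)"
    unfolding x k q_def by (simp add: algebra_simps power2_eq_square power3_eq_cube)
  then show ?thesis by simp
qed

lemma power3_dvd_iterated_cube_diff:
  fixes x y :: "'a::comm_ring_1"
  assumes "3 dvd x - y"
  shows "3 ^ (j + 1) dvd x ^ 3 ^ j - y ^ 3 ^ j"
proof (induction j)
  case 0
  then show ?case using assms by simp
next
  case (Suc j)
  then have "3 ^ (j + 1 + 1) dvd (x ^ 3 ^ j) ^ 3 - (y ^ 3 ^ j) ^ 3"
    by (intro power3_dvd_cube_diff) simp_all
  then show ?case by (simp add: power_mult[symmetric] mult.commute)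
qed

lemma power3_dvd_of_cube_minus_self:
  fixes d :: "'a::comm_ring_1"
  assumes cube: "3 ^ m dvd d ^ 3 - d" and three: "3 dvd d"
  shows "3 ^ m dvd d"
proof -
  have "3 ^ Suc i dvd d" if "Suc i \<le> m" for i
    using that
  proof (induction i)
    case 0
    then show ?case using three by simp
  next
    case (Suc i)
    then obtain u where u: "d = 3 ^ Suc i * u" by (auto elim: dvdE)
    have "d ^ 3 = 3 ^ (Suc i * 3) * u ^ 3"
      unfolding u by (simp only: power_mult_distrib power_mult)
    moreover have "3 ^ Suc (Suc i) dvd (3::'a) ^ (Suc i * 3)"
      by (rule le_imp_power_dvd) simp
    ultimately have "3 ^ Suc (Suc i) dvd d ^ 3" by simp
    moreover have "3 ^ Suc (Suc i) dvd d ^ 3 - d"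
      using cube Suc.prems by (meson dvd_trans le_imp_power_dvd)
    ultimately have "3 ^ Suc (Suc i) dvd d ^ 3 - (d ^ 3 - d)" by (rule dvd_diff)
    then show ?case by simp
  qed
  then show ?thesis by (cases m) simp_all
qed

lemma idempotent_mod_power3_unique:
  fixes e f :: "'a::comm_ring_1"
  assumes "3 ^ m dvd e * e - e" and "3 ^ m dvd f * f - f" and "3 dvd e - f"
  shows "3 ^ m dvd e - f"
proof (rule power3_dvd_of_cube_minus_self)
  have "(e - f) ^ 3 - (e - f) = (e + 1 - 3 * f) * (e * e - e) - (f + 1 - 3 * e) * (f * f - f)"
    by (simp add: algebra_simps power3_eq_cube)
  then show "3 ^ m dvd (e - f) ^ 3 - (e - f)"
    using assms(1,2) by (simp add: dvd_diff)
qed (fact assms(3))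


lemma dvd_power_Suc_diff_of_idempotent:
  fixes p e :: "'a::comm_ring_1"
  assumes idem: "p dvd e * e - e"
  shows "p dvd e ^ Suc i - e"
proof (induction i)
  case 0
  then show ?case by simp
next
  case (Suc i)
  have "p dvd e * (e ^ Suc i - e) + (e * e - e)"
    using Suc.IH idem by simp
  also have "e * (e ^ Suc i - e) + (e * e - e) = e ^ Suc (Suc i) - e"
    by (simp add: algebra_simps)
  finally show ?case .
qed

locale ring_endo =
  fixes \<phi> :: "'a::comm_ring_1 \<Rightarrow> 'a"
  assumes map_add: "\<phi> (x + y) = \<phi> x + \<phi> y"
    and map_mult: "\<phi> (x * y) = \<phi> x * \<phi> y"
    and map_one: "\<phi> 1 = 1"
begin

lemma map_zero: "\<phi> 0 = 0"
  using map_add[of 0 0] by simp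

lemma map_diff: "\<phi> (x - y) = \<phi> x - \<phi> y"
  using map_add[of "x - y" y] by simp

lemma map_power: "\<phi> (x ^ n) = \<phi> x ^ n"
  by (induction n) (simp_all add: map_one map_mult)

lemma map_of_nat: "\<phi> (of_nat n) = of_nat n"
  by (induction n) (simp_all add: map_zero map_one map_add)

lemma map_numeral: "\<phi> (numeral n) = numeral n"
  using map_of_nat[of "numeral n"] by simp

lemma map_dvd: "p dvd x \<Longrightarrow> \<phi> p dvd \<phi> x"
  by (auto elim!: dvdE simp: map_mult)

end

locale frobenius_lift_mod3 = ring_endo +
  fixes N :: nat
  assumes frobenius: "3 dvd \<phi> x - x ^ 3"
    and periodic: "(\<phi> ^^ N) x = x"
    and N_pos: "N > 0"
begin

lemma funpow_congruent: "3 dvd (\<phi> ^^ k) x - x ^ 3 ^ k"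
proof (induction k)
  case 0
  then show ?case by simp
next
  case (Suc k)
  have "(\<phi> ^^ Suc k) x - x ^ 3 ^ Suc k
      = \<phi> ((\<phi> ^^ k) x - x ^ 3 ^ k) + (\<phi> x ^ 3 ^ k - (x ^ 3) ^ 3 ^ k)"
    by (simp add: map_diff map_power power_mult[symmetric] mult.commute)
  moreover have "3 dvd \<phi> ((\<phi> ^^ k) x - x ^ 3 ^ k)"
    using map_dvd[OF Suc.IH] by (simp add: map_numeral)
  moreover have "3 dvd \<phi> x ^ 3 ^ k - (x ^ 3) ^ 3 ^ k"
    by (rule dvd_power_diff[OF frobenius])
  ultimately show ?case by simp
qed

lemma power_3_power_N_congruent:
  fixes x :: 'a
  shows "3 dvd x ^ 3 ^ N - x"
proof -
  have "3 dvd x - x ^ 3 ^ N"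
    using funpow_congruent[of N x] by (simp only: periodic)
  then show ?thesis by (metis dvd_minus_iff minus_diff_eq)
qed

lemma fixes_idempotent:
  assumes idem: "3 ^ m dvd e * e - e"
  shows "3 ^ m dvd \<phi> e - e"
proof (cases m)
  case 0
  then show ?thesis by simp
next
  case (Suc m')
  have idem3: "3 dvd e * e - e"
    using idem unfolding Suc by (metis dvd_mult_left power_Suc)
  show ?thesis
  proof (rule idempotent_mod_power3_unique)
    show "3 ^ m dvd \<phi> e * \<phi> e - \<phi> e"
      using map_dvd[OF idem] by (simp add: map_diff map_mult map_power map_numeral)
    have "3 dvd (\<phi> e - e ^ 3) + (e + 1) * (e * e - e)"
      using frobenius[of e] idem3 by simp
    also have "(\<phi> e - e ^ 3) + (e + 1) * (e * e - e) = \<phi> e - e"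
      by (simp add: algebra_simps power3_eq_cube)
    finally show "3 dvd \<phi> e - e" .
  qed (fact idem)
qed

text \<open>The witness is \<open>e = c ^ ((3 ^ N - 1) * 3 ^ (m - 1))\<close>.\<close>

lemma idempotent_approximation:
  fixes c :: 'a
  shows "\<exists>e d. 3 ^ m dvd e * e - e \<and> e = c * d \<and> 3 dvd (1 - e) * c"
proof -
  have "(3::nat) ^ 1 \<le> 3 ^ N"
    using N_pos by (intro power_increasing) simp_all
  then obtain n where n: "3 ^ N = Suc (Suc n)"
    using Suc_le_D by (metis numeral_3_eq_3 power_one_right Suc_le_mono)
  define \<epsilon> where "\<epsilon> = c ^ Suc n"
  have period: "3 dvd c ^ Suc (Suc n) - c"
    using power_3_power_N_congruent[of c] unfolding n .
  have "\<epsilon> * \<epsilon> - \<epsilon> = c ^ n * (c ^ Suc (Suc n) - c)"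
    unfolding \<epsilon>_def by (simp add: algebra_simps power_add[symmetric])
  then have idem3: "3 dvd \<epsilon> * \<epsilon> - \<epsilon>"
    using period by simp
  define j where "j = m - 1"
  define e where "e = \<epsilon> ^ 3 ^ j"
  obtain i where i: "(3::nat) ^ j = Suc i"
    using gr0_implies_Suc[of "3 ^ j"] by auto
  have "3 ^ (j + 1) dvd (\<epsilon> * \<epsilon>) ^ 3 ^ j - \<epsilon> ^ 3 ^ j"
    using idem3 by (rule power3_dvd_iterated_cube_diff)
  moreover have "(3::'a) ^ m dvd 3 ^ (j + 1)"
    unfolding j_def by (rule le_imp_power_dvd) simp
  ultimately have "3 ^ m dvd e * e - e"
    unfolding e_def by (simp add: power_mult_distrib dvd_trans)
  moreover have "e = c * (c ^ n * \<epsilon> ^ i)"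
    unfolding e_def i \<epsilon>_def by (simp add: algebra_simps)
  moreover have "3 dvd (1 - e) * c"
  proof -
    have "3 dvd e - \<epsilon>"
      using dvd_power_Suc_diff_of_idempotent[OF idem3, of i] unfolding e_def i .
    then have "3 dvd - (c ^ Suc (Suc n) - c) - (e - \<epsilon>) * c"
      using period by (metis dvd_diff dvd_minus_iff dvd_mult2)
    also have "- (c ^ Suc (Suc n) - c) - (e - \<epsilon>) * c = (1 - e) * c"
      unfolding \<epsilon>_def by (simp add: algebra_simps)
    finally show ?thesis .
  qed
  ultimately show ?thesis by blast
qed

text \<open>
  Induction on the power of 3 in front of \<open>c\<close>: split \<open>c = e c + (1 - e) c\<close> with \<open>e = c d\<close>
  idempotent modulo \<open>3 ^ m\<close>. Since \<open>\<phi>\<close> fixes \<open>e\<close> modulo \<open>3 ^ m\<close>, \<open>\<phi>\<close> acts on \<open>e c\<close> as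
  multiplication by \<open>e d \<phi> c\<close>, and \<open>(1 - e) c\<close> is divisible by 3.
\<close>

lemma lift_mod_power3_scaled: "\<exists>w. 3 ^ m dvd \<phi> (3 ^ j * c) - 3 ^ j * c * w"
proof (induction "m - j" arbitrary: j c)
  case 0
  then have "(3::'a) ^ m dvd 3 ^ j" by (simp add: le_imp_power_dvd)
  then have "3 ^ m dvd \<phi> (3 ^ j * c) - 3 ^ j * c * 0"
    by (simp add: map_mult map_power map_numeral)
  then show ?case by blast
next
  case (Suc n)
  obtain e d where idem: "3 ^ m dvd e * e - e" and e: "e = c * d" and unit: "3 dvd (1 - e) * c"
    using idempotent_approximation by blast
  obtain c' where c': "(1 - e) * c = 3 * c'"
    using unit by (auto elim: dvdE)
  have "n = m - (j + 1)"
    using Suc.hyps(2) by arith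
  then obtain w' where w': "3 ^ m dvd \<phi> (3 ^ (j + 1) * c') - 3 ^ (j + 1) * c' * w'"
    using Suc.hyps(1) by blast
  have c'_scaled: "3 ^ (j + 1) * c' = 3 ^ j * ((1 - e) * c)"
    by (simp add: c')
  then have "3 ^ j * c = e * (3 ^ j * c) + 3 ^ (j + 1) * c'"
    by (simp add: algebra_simps)
  then have "\<phi> (3 ^ j * c) = \<phi> (e * (3 ^ j * c) + 3 ^ (j + 1) * c')"
    by (rule arg_cong)
  also have "\<dots> = 3 ^ j * \<phi> e * \<phi> c + \<phi> (3 ^ (j + 1) * c')"
    by (simp add: map_add map_mult map_power map_numeral)
  finally have "\<phi> (3 ^ j * c) = 3 ^ j * \<phi> e * \<phi> c + \<phi> (3 ^ (j + 1) * c')" .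
  moreover have "3 ^ j * c * (e * d * \<phi> c + (1 - e) * w')
      = 3 ^ j * (e * e) * \<phi> c + 3 ^ (j + 1) * c' * w'"
    unfolding c'_scaled e by (simp add: algebra_simps)
  ultimately have "\<phi> (3 ^ j * c) - 3 ^ j * c * (e * d * \<phi> c + (1 - e) * w')
      = 3 ^ j * \<phi> c * ((\<phi> e - e) - (e * e - e))
        + (\<phi> (3 ^ (j + 1) * c') - 3 ^ (j + 1) * c' * w')"
    by (simp add: algebra_simps)
  moreover have "3 ^ m dvd (\<phi> e - e) - (e * e - e)"
    using fixes_idempotent[OF idem] idem by (rule dvd_diff)
  ultimately show ?case using w' by (metis dvd_add dvd_mult)
qed

theorem lift_mod_power3: "\<exists>w. 3 ^ m dvd \<phi> c - c * w"
  using lift_mod_power3_scaled[of m 0 c] by simp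

end

section \<open>Group rings of finite rings\<close>

lemma lookup_mult_finite:
  fixes F H :: "'g::{finite, ab_group_add} \<Rightarrow>\<^sub>0 int"
  shows "Poly_Mapping.lookup (F * H) k
    = (\<Sum>l\<in>UNIV. Poly_Mapping.lookup F l * Poly_Mapping.lookup H (k - l))"
proof -
  have "(\<Sum>q. Poly_Mapping.lookup H q when k = l + q) = Poly_Mapping.lookup H (k - l)" for l
  proof -
    have "(\<lambda>q. Poly_Mapping.lookup H q when k = l + q)
        = (\<lambda>q. if q = k - l then Poly_Mapping.lookup H q else 0)"
      by (auto simp: fun_eq_iff when_def algebra_simps)
    then show ?thesis by (simp only: Sum_any.delta)
  qed
  then have "Poly_Mapping.lookup (F * H) k
      = (\<Sum>l. Poly_Mapping.lookup F l * Poly_Mapping.lookup H (k - l))"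
    by (simp add: lookup_mult)
  also have "\<dots> = (\<Sum>l\<in>UNIV. Poly_Mapping.lookup F l * Poly_Mapping.lookup H (k - l))"
    by (rule Sum_any.expand_superset) auto
  finally show ?thesis .
qed

lemma lookup_single_mult:
  fixes F :: "'g::{finite, ab_group_add} \<Rightarrow>\<^sub>0 int"
  shows "Poly_Mapping.lookup (Poly_Mapping.single g c * F) k = c * Poly_Mapping.lookup F (k - g)"
proof -
  have "Poly_Mapping.lookup (Poly_Mapping.single g c * F) k
      = (\<Sum>l\<in>UNIV. if l = g then c * Poly_Mapping.lookup F (k - l) else 0)"
    unfolding lookup_mult_finite by (rule sum.cong) (auto simp: lookup_single when_def)
  then show ?thesis by simp
qed

lemma of_nat_mult_cancel:
  fixes X Y :: "'g::{finite, ab_group_add} \<Rightarrow>\<^sub>0 int"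
  assumes "of_nat n * X = of_nat n * Y" and "n \<noteq> 0"
  shows "X = Y"
proof (rule poly_mapping_eqI)
  fix k
  have "Poly_Mapping.lookup (of_nat n * Z) k = of_nat n * Poly_Mapping.lookup Z k"
    for Z :: "'g \<Rightarrow>\<^sub>0 int"
    using lookup_single_mult[of 0 "of_nat n" Z k] by simp
  then show "Poly_Mapping.lookup X k = Poly_Mapping.lookup Y k"
    using assms by (metis mult_cancel_left of_nat_eq_0_iff)
qed

text \<open>
  For \<open>u * v = 1\<close>, \<open>dilate v\<close> is the ring automorphism induced by \<open>x \<mapsto> u * x\<close> on group
  elements; \<open>dilate (-1)\<close> is the conjugation \<open>a \<mapsto> a*\<close>.
\<close>

definition dilate :: "'g::{finite, times} \<Rightarrow> ('g \<Rightarrow>\<^sub>0 int) \<Rightarrow> 'g \<Rightarrow>\<^sub>0 int" where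
  "dilate u F = Abs_poly_mapping (\<lambda>y. Poly_Mapping.lookup F (u * y))"

lemma lookup_dilate [simp]: "Poly_Mapping.lookup (dilate u F) y = Poly_Mapping.lookup F (u * y)"
  unfolding dilate_def by (subst lookup_Abs_poly_mapping) simp_all

lemma dilate_dilate:
  fixes u v :: "'g::{finite, semigroup_mult}"
  shows "dilate u (dilate v F) = dilate (v * u) F"
  by (rule poly_mapping_eqI) (simp add: mult.assoc)

lemma dilate_1: "dilate (1::'g::{finite, monoid_mult}) F = F"
  by (rule poly_mapping_eqI) simp

lemma dilate_single:
  fixes u v :: "'g::{finite, comm_ring_1}"
  assumes "u * v = 1"
  shows "dilate v (Poly_Mapping.single x c) = Poly_Mapping.single (u * x) c"
proof (rule poly_mapping_eqI)
  fix y
  have "x = v * y \<longleftrightarrow> u * x = y"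
    using assms by (metis mult.assoc mult.commute mult_1)
  then show "Poly_Mapping.lookup (dilate v (Poly_Mapping.single x c)) y
      = Poly_Mapping.lookup (Poly_Mapping.single (u * x) c) y"
    by (simp add: lookup_single when_def)
qed

lemma ring_endo_dilate:
  fixes u v :: "'g::{finite, comm_ring_1}"
  assumes uv: "u * v = 1"
  shows "ring_endo (dilate u)"
proof
  show "dilate u (F + H) = dilate u F + dilate u H" for F H
    by (rule poly_mapping_eqI) (simp add: lookup_add)
  show "dilate u (F * H) = dilate u F * dilate u H" for F H
  proof (rule poly_mapping_eqI)
    fix y
    have "Poly_Mapping.lookup (dilate u F * dilate u H) y
        = (\<Sum>l\<in>UNIV. Poly_Mapping.lookup F (u * l) * Poly_Mapping.lookup H (u * (y - l)))"
      by (simp add: lookup_mult_finite)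
    also have "\<dots> = (\<Sum>l\<in>UNIV. Poly_Mapping.lookup F l * Poly_Mapping.lookup H (u * y - l))"
      by (rule sum.reindex_bij_witness[where i="\<lambda>l. v * l" and j="\<lambda>l. u * l"])
        (auto simp: algebra_simps uv mult.assoc[symmetric])
    also have "\<dots> = Poly_Mapping.lookup (dilate u (F * H)) y"
      by (simp add: lookup_mult_finite)
    finally show "Poly_Mapping.lookup (dilate u (F * H)) y
        = Poly_Mapping.lookup (dilate u F * dilate u H) y" ..
  qed
  have "v * u = 1" using uv by (simp add: mult.commute)
  then show "dilate u 1 = 1"
    using dilate_single[of v u 0 1] by simp
qed

lemma frobenius_dilate_mod3:
  fixes v :: "'g::{finite, comm_ring_1}"
  assumes "3 * v = 1"
  shows "3 dvd dilate v Y - Y ^ 3"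
proof -
  interpret dilate: ring_endo "dilate v"
    using assms by (intro ring_endo_dilate[of v 3]) (simp add: mult.commute)
  show ?thesis
    using subset_UNIV
  proof (induction Y rule: frag_induction)
    case zero
    then show ?case by (simp add: dilate.map_zero)
  next
    case (one x)
    then show ?case
      using assms by (simp add: dilate_single power3_eq_cube mult_single)
  next
    case (diff a b)
    have "dilate v (a - b) - (a - b) ^ 3
        = (dilate v a - a ^ 3) - (dilate v b - b ^ 3) + 3 * (a * a * b - a * b * b)"
      by (simp add: dilate.map_diff algebra_simps power3_eq_cube)
    then show ?case
      using diff by simp
  qed
qed

lemma funpow_dilate:
  fixes v :: "'g::{finite, comm_monoid_mult}"
  shows "(dilate v ^^ k) F = dilate (v ^ k) F"
  by (induction k) (simp_all add: dilate_1 dilate_dilate mult.commute)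

lemma frobenius_lift_mod3_dilate:
  fixes v :: "'g::{finite, comm_ring_1}"
  assumes "3 * v = 1" and "v ^ N = 1" and "N > 0"
  shows "frobenius_lift_mod3 (dilate v) N"
proof -
  interpret ring_endo "dilate v"
    using assms by (intro ring_endo_dilate[of v 3]) (simp add: mult.commute)
  show ?thesis
    using assms by unfold_locales (simp_all add: frobenius_dilate_mod3 funpow_dilate dilate_1)
qed

section \<open>The multiplier 3\<close>

definition autocorrelation :: "('g::{finite, ab_group_add} \<Rightarrow> int) \<Rightarrow> 'g \<Rightarrow> int" where
  "autocorrelation f s = (\<Sum>x\<in>UNIV. f x * f (x - s))"

lemma autocorrelation_translate:
  "autocorrelation (\<lambda>x. f (x + t)) = autocorrelation f"
proof
  fix s
  show "autocorrelation (\<lambda>x. f (x + t)) s = autocorrelation f s"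
    unfolding autocorrelation_def
    by (rule sum.reindex_bij_witness[where i="\<lambda>y. y - t" and j="\<lambda>x. x + t"])
      (auto simp: algebra_simps)
qed

lemma lookup_mult_conj:
  fixes f :: "'g::{finite, comm_ring_1} \<Rightarrow> int"
  shows "Poly_Mapping.lookup (Abs_poly_mapping f * dilate (-1) (Abs_poly_mapping f)) s
    = autocorrelation f s"
  by (simp add: lookup_mult_finite autocorrelation_def)

lemma sum_squares_eq_1_int:
  fixes u :: "'a \<Rightarrow> int"
  assumes "finite A" and sum: "(\<Sum>l\<in>A. u l * u l) = 1"
  obtains g where "g \<in> A" and "u g = 1 \<or> u g = -1" and "\<And>l. l \<in> A \<Longrightarrow> l \<noteq> g \<Longrightarrow> u l = 0"
proof -
  have "\<exists>g\<in>A. u g \<noteq> 0"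
  proof (rule ccontr)
    assume "\<not> (\<exists>g\<in>A. u g \<noteq> 0)"
    then have "(\<Sum>l\<in>A. u l * u l) = 0" by simp
    with sum show False by simp
  qed
  then obtain g where g: "g \<in> A" "u g \<noteq> 0" ..
  have "(\<Sum>l\<in>A. u l * u l) = u g * u g + (\<Sum>l\<in>A - {g}. u l * u l)"
    using assms(1) g(1) by (rule sum.remove)
  moreover have "u g * u g > 0"
    using g(2) by (auto simp: zero_less_mult_iff linorder_neq_iff)
  moreover have "(\<Sum>l\<in>A - {g}. u l * u l) \<ge> 0"
    by (intro sum_nonneg) simp
  ultimately have "u g * u g = 1" and rest: "(\<Sum>l\<in>A - {g}. u l * u l) = 0"
    using sum by linarith+
  then have "u g = 1 \<or> u g = -1"
    by (simp add: square_eq_1_iff)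
  moreover have "u l = 0" if "l \<in> A" "l \<noteq> g" for l
    using rest assms(1) that by (simp add: sum_nonneg_eq_0_iff)
  ultimately show ?thesis
    using that g(1) by blast
qed

lemma conj_unit_single:
  fixes U :: "'g::{finite, comm_ring_1} \<Rightarrow>\<^sub>0 int"
  assumes "U * dilate (-1) U = 1"
  obtains g \<epsilon> where "\<epsilon> = 1 \<or> \<epsilon> = -1" and "U = Poly_Mapping.single g \<epsilon>"
proof -
  have "(\<Sum>l\<in>UNIV. Poly_Mapping.lookup U l * Poly_Mapping.lookup U l) = 1"
    using arg_cong[OF assms, of "\<lambda>F. Poly_Mapping.lookup F 0"]
    by (simp add: lookup_mult_finite)
  then obtain g where g: "Poly_Mapping.lookup U g = 1 \<or> Poly_Mapping.lookup U g = -1"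
    and rest: "\<And>l. l \<noteq> g \<Longrightarrow> Poly_Mapping.lookup U l = 0"
    by (rule sum_squares_eq_1_int[OF finite]) auto
  have "U = Poly_Mapping.single g (Poly_Mapping.lookup U g)"
    by (rule poly_mapping_eqI) (metis lookup_single_eq lookup_single_not_eq rest)
  then show ?thesis
    using that g by blast
qed

theorem multiplier_3:
  fixes \<alpha> :: "'g::{finite, comm_ring_1} \<Rightarrow>\<^sub>0 int"
  assumes "3 * v = 1" and "v ^ N = 1" and "N > 0"
    and norm: "\<alpha> * dilate (-1) \<alpha> = 3 ^ m"
  obtains g \<epsilon> where "\<epsilon> = 1 \<or> \<epsilon> = -1" and "dilate v \<alpha> = Poly_Mapping.single g \<epsilon> * \<alpha>"
proof -
  interpret \<phi>: frobenius_lift_mod3 "dilate v" N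
    using assms(1-3) by (rule frobenius_lift_mod3_dilate)
  interpret conj: ring_endo "dilate (-1 :: 'g)"
    by (rule ring_endo_dilate[of "-1" "-1"]) simp
  have conj_conj: "dilate (-1) (dilate (-1) F) = F" for F :: "'g \<Rightarrow>\<^sub>0 int"
    by (simp add: dilate_dilate dilate_1)
  have conj_\<phi>: "dilate (-1) (dilate v F) = dilate v (dilate (-1) F)" for F
    by (simp add: dilate_dilate mult.commute)
  obtain w where "3 ^ m dvd dilate v \<alpha> - \<alpha> * w"
    using \<phi>.lift_mod_power3 by blast
  then obtain t where t: "dilate v \<alpha> = \<alpha> * w + 3 ^ m * t"
    by (metis dvdE diff_add_cancel add.commute)
  \<comment> \<open>\<open>T\<close> is divisible by \<open>3 ^ m\<close> and has norm \<open>3 ^ (2 * m)\<close>, so \<open>T / 3 ^ m\<close> has norm 1.\<close>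
  define U where "U = w + t * dilate (-1) \<alpha>"
  define T where "T = dilate v \<alpha> * dilate (-1) \<alpha>"
  have "T = (\<alpha> * dilate (-1) \<alpha>) * w + 3 ^ m * (t * dilate (-1) \<alpha>)"
    unfolding T_def t by (simp add: algebra_simps)
  then have T: "T = 3 ^ m * U"
    unfolding norm U_def by (simp add: algebra_simps)
  have "T * dilate (-1) T = dilate v (\<alpha> * dilate (-1) \<alpha>) * (\<alpha> * dilate (-1) \<alpha>)"
    unfolding T_def by (simp add: conj.map_mult \<phi>.map_mult conj_conj conj_\<phi> algebra_simps)
  also have "\<dots> = 3 ^ m * 3 ^ m"
    unfolding norm by (simp add: \<phi>.map_power \<phi>.map_numeral)
  finally have "of_nat (3 ^ m * 3 ^ m) * (U * dilate (-1) U) = of_nat (3 ^ m * 3 ^ m) * 1"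
    unfolding T by (simp add: conj.map_mult conj.map_power conj.map_numeral algebra_simps)
  then have "U * dilate (-1) U = 1"
    by (rule of_nat_mult_cancel) simp
  then obtain g \<epsilon> where \<epsilon>: "\<epsilon> = 1 \<or> \<epsilon> = -1" and U: "U = Poly_Mapping.single g \<epsilon>"
    by (rule conj_unit_single)
  have "dilate v \<alpha> * 3 ^ m = T * \<alpha>"
    unfolding T_def norm[symmetric] by (simp add: algebra_simps)
  also have "\<dots> = 3 ^ m * (U * \<alpha>)"
    unfolding T by (simp add: algebra_simps)
  finally have "of_nat (3 ^ m) * dilate v \<alpha> = of_nat (3 ^ m) * (U * \<alpha>)"
    by (simp add: mult.commute)
  then have "dilate v \<alpha> = U * \<alpha>"
    by (rule of_nat_mult_cancel) simp
  then show ?thesis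
    using that \<epsilon> U by blast
qed

lemma autocorrelation_norm:
  fixes f :: "'g::{finite, comm_ring_1} \<Rightarrow> int"
  assumes "\<And>s. autocorrelation f s = (if s = 0 then int n else 0)"
  shows "Abs_poly_mapping f * dilate (-1) (Abs_poly_mapping f) = of_nat n"
proof (rule poly_mapping_eqI)
  fix s
  show "Poly_Mapping.lookup (Abs_poly_mapping f * dilate (-1) (Abs_poly_mapping f)) s
      = Poly_Mapping.lookup (of_nat n) s"
    using lookup_mult_conj[of f s] assms[of s] by (simp add: lookup_of_nat when_def)
qed

lemma multiplier_3_sequence:
  fixes f :: "'g::{finite, comm_ring_1} \<Rightarrow> int" and v :: 'g
  assumes "3 * v = 1" and "v ^ N = 1" and "N > 0"
    and autocorr: "\<And>s. autocorrelation f s = (if s = 0 then 3 ^ m else 0)"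
  obtains g \<epsilon> where "\<epsilon> = 1 \<or> \<epsilon> = -1" and "\<And>y. f (v * y) = \<epsilon> * f (y - g)"
proof -
  define \<alpha> where "\<alpha> = Abs_poly_mapping f"
  have lookup_\<alpha>: "Poly_Mapping.lookup \<alpha> = f"
    unfolding \<alpha>_def by (rule lookup_Abs_poly_mapping) simp
  have "\<alpha> * dilate (-1) \<alpha> = of_nat (3 ^ m)"
    unfolding \<alpha>_def using autocorr by (intro autocorrelation_norm) simp
  then obtain g \<epsilon> where "\<epsilon> = 1 \<or> \<epsilon> = -1" and "dilate v \<alpha> = Poly_Mapping.single g \<epsilon> * \<alpha>"
    using assms(1-3) by (elim multiplier_3) simp_all
  then show ?thesis
    using that arg_cong[of _ _ "\<lambda>F. Poly_Mapping.lookup F y" for y]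
    by (metis lookup_dilate lookup_single_mult lookup_\<alpha>)
qed

lemma multiplier_3_translate:
  fixes f :: "'g::{finite, comm_ring_1} \<Rightarrow> int" and v w :: 'g
  assumes v: "3 * v = 1" and N: "v ^ N = 1" "odd N" and w: "2 * w = 1"
    and autocorr: "\<And>s. autocorrelation f s = (if s = 0 then 3 ^ m else 0)"
  obtains t where "\<And>x. f (3 * x + t) = f (x + t)"
proof -
  obtain g \<epsilon> where \<epsilon>: "\<epsilon> = 1 \<or> \<epsilon> = -1" and multiplier: "\<And>y. f (v * y) = \<epsilon> * f (y - g)"
    using v N(1) odd_pos[OF N(2)] autocorr by (rule multiplier_3_sequence) blast
  define t where "t = w * g"
  have step: "f (x + t) = \<epsilon> * f (3 * x + t)" for x
  proof -
    have "v * (3 * (x + t)) = x + t"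
      using v by (metis mult.assoc mult.commute mult_1)
    moreover have "3 * (x + t) - g = 3 * x + t"
    proof -
      have "g = 2 * t"
        using w unfolding t_def by (metis mult.assoc mult_1)
      then show ?thesis by (simp add: algebra_simps)
    qed
    ultimately show ?thesis
      using multiplier[of "3 * (x + t)"] by (simp only:)
  qed
  have iterate: "f (x + t) = \<epsilon> ^ k * f (3 ^ k * x + t)" for k x
  proof (induction k)
    case (Suc k)
    then show ?case
      using step[of "3 ^ k * x"] by (simp add: mult.assoc)
  qed simp
  have "(3::'g) ^ N = 1"
    using v N(1) by (metis power_mult_distrib power_one mult_1_right)
  then have "f (x + t) = \<epsilon> ^ N * f (x + t)" for x
    using iterate[of x N] by simp
  moreover obtain x where "f (x + t) \<noteq> 0"
  proof -
    have "\<not> (\<forall>x. f x = 0)"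
    proof
      assume "\<forall>x. f x = 0"
      then show False
        using autocorr[of 0] unfolding autocorrelation_def by simp
    qed
    then show ?thesis
      using that by (metis diff_add_cancel)
  qed
  ultimately have "\<epsilon> ^ N = 1"
    by (metis mult_cancel_right1)
  then have "\<epsilon> = 1"
    using \<epsilon> N(2) by auto
  then show ?thesis
    using that step by (metis mult_1)
qed

section \<open>Coset sums over \<open>\<int>/n\<close>\<close>

lemma of_nat_bit1_eq_iff:
  assumes "i < CARD('n::finite bit1)" and "j < CARD('n bit1)"
  shows "(of_nat i :: 'n bit1) = of_nat j \<longleftrightarrow> i = j"
proof
  assume "(of_nat i :: 'n bit1) = of_nat j"
  then have "int i mod int CARD('n bit1) = int j mod int CARD('n bit1)"
    by (metis bit1.of_nat_eq bit1.Rep_Abs_mod)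
  then show "i = j"
    using assms by simp
qed simp

lemma of_nat_mod_bit1: "(of_nat (a mod CARD('n::finite bit1)) :: 'n bit1) = of_nat a"
  by (simp only: bit1.of_nat_eq of_nat_mod mod_mod_trivial)

lemma of_nat_card_bit1: "of_nat CARD('n::finite bit1) = (0::'n bit1)"
  by (metis bit1.CHAR_eq of_nat_CHAR)

lemma of_nat_diff_bit1:
  assumes "j < CARD('n::finite bit1)"
  shows "(of_nat i - of_nat j :: 'n bit1) = of_nat ((i + CARD('n bit1) - j) mod CARD('n bit1))"
  using assms by (simp add: of_nat_mod_bit1 of_nat_diff of_nat_card_bit1 del: card_bit1)

lemma bit1_of_nat_cases:
  obtains i where "i < CARD('n::finite bit1)" and "x = (of_nat i :: 'n bit1)"
proof (cases x rule: bit1_cases)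
  case (of_int z)
  then show ?thesis
    using that[of "nat z"] by simp
qed

lemma sum_UNIV_bit1:
  "(\<Sum>x\<in>UNIV. F x) = (\<Sum>i<CARD('n::finite bit1). F (of_nat i :: 'n bit1))"
proof (rule sum.reindex_bij_betw[symmetric])
  have "x \<in> of_nat ` {..<CARD('n bit1)}" for x :: "'n bit1"
    by (rule bit1_of_nat_cases[of x]) auto
  then have "of_nat ` {..<CARD('n bit1)} = (UNIV :: 'n bit1 set)"
    by blast
  moreover have "inj_on (of_nat :: nat \<Rightarrow> 'n bit1) {..<CARD('n bit1)}"
    by (auto simp: inj_on_def of_nat_bit1_eq_iff simp del: card_bit1)
  ultimately show "bij_betw (of_nat :: nat \<Rightarrow> 'n bit1) {..<CARD('n bit1)} UNIV"
    by (simp add: bij_betw_def)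
qed

lemma sum_UNIV_bit1_cosets:
  assumes "d * e = CARD('n::finite bit1)"
  shows "(\<Sum>x\<in>UNIV. F x) = (\<Sum>c<d. \<Sum>k<e. F (of_nat c + of_nat d * of_nat k :: 'n bit1))"
proof -
  have d: "d > 0"
    using assms by (metis mult_is_0 zero_less_card_finite gr0I)
  have "(\<Sum>c<d. \<Sum>k<e. F (of_nat (c + d * k) :: 'n bit1))
      = (\<Sum>(c, k)\<in>{..<d} \<times> {..<e}. F (of_nat (c + d * k)))"
    by (simp add: sum.cartesian_product)
  also have "\<dots> = (\<Sum>i<d * e. F (of_nat i))"
  proof -
    have "c + d * k < d * e" if "c < d" "k < e" for c k
    proof -
      have "c + d * k < d * Suc k" using that by simp
      also have "\<dots> \<le> d * e" using that by (intro mult_le_mono2) simp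
      finally show ?thesis .
    qed
    then show ?thesis
      by (intro sum.reindex_bij_witness[where i="\<lambda>i. (i mod d, i div d)"
            and j="\<lambda>(c, k). c + d * k"])
        (use d in \<open>auto simp: less_mult_imp_div_less mult.commute\<close>)
  qed
  finally show ?thesis
    unfolding assms by (simp add: sum_UNIV_bit1)
qed

text \<open>
  For \<open>d * e = n\<close>, \<open>coset_sum h d e z\<close> is the sum of \<open>h\<close> over the coset of \<open>z\<close> modulo the
  subgroup of order \<open>e\<close> of \<open>\<int>/n\<close>, i.e. a coefficient of the image of \<open>h\<close> in \<open>\<int>[\<int>/d]\<close>.
\<close>

definition coset_sum :: "('a::semiring_1 \<Rightarrow> int) \<Rightarrow> nat \<Rightarrow> nat \<Rightarrow> 'a \<Rightarrow> int" where
  "coset_sum h d e z = (\<Sum>k<e. h (z + of_nat d * of_nat k))"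

lemma coset_sum_shift:
  fixes z :: "'a::comm_ring_1"
  assumes "of_nat (d * e) = (0::'a)"
  shows "coset_sum h d e (z + of_nat d * of_nat k) = coset_sum h d e z"
proof (induction k)
  case (Suc k)
  have shift: "coset_sum h d e (y + of_nat d) = coset_sum h d e y" for y :: 'a
  proof (cases e)
    case (Suc e')
    have "coset_sum h d e (y + of_nat d) = (\<Sum>k<Suc e'. h (y + of_nat d * of_nat (Suc k)))"
      unfolding coset_sum_def Suc by (intro sum.cong) (simp_all add: algebra_simps)
    also have "\<dots> = (\<Sum>k<e'. h (y + of_nat d * of_nat (Suc k))) + h (y + of_nat d * of_nat e)"
      unfolding Suc by (rule sum.lessThan_Suc)
    also have "h (y + of_nat d * of_nat e) = h (y + of_nat d * of_nat 0)"
      using assms by simp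
    also have "(\<Sum>k<e'. h (y + of_nat d * of_nat (Suc k))) + h (y + of_nat d * of_nat 0)
        = coset_sum h d e y"
      unfolding coset_sum_def Suc sum.lessThan_Suc_shift by simp
    finally show ?thesis .
  qed (simp add: coset_sum_def)
  have "coset_sum h d e (z + of_nat d * of_nat (Suc k))
      = coset_sum h d e ((z + of_nat d * of_nat k) + of_nat d)"
    by (simp add: algebra_simps)
  also have "\<dots> = coset_sum h d e z"
    using shift Suc.IH by simp
  finally show ?case .
qed simp

lemma coset_sum_autocorrelation:
  fixes h :: "'n::finite bit1 \<Rightarrow> int"
  assumes de: "d * e = CARD('n bit1)"
  shows "(\<Sum>c<d. coset_sum h d e (of_nat c) * coset_sum h d e (of_nat c + s))
    = (\<Sum>k<e. autocorrelation h (- (s + of_nat d * of_nat k)))"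
proof -
  have zero: "of_nat (d * e) = (0::'n bit1)"
    unfolding de by (rule of_nat_card_bit1)
  have "(\<Sum>c<d. coset_sum h d e (of_nat c) * coset_sum h d e (of_nat c + s))
      = (\<Sum>c<d. \<Sum>k<e. h (of_nat c + of_nat d * of_nat k)
          * coset_sum h d e ((of_nat c + of_nat d * of_nat k) + s))"
  proof -
    have "coset_sum h d e ((of_nat c + of_nat d * of_nat k) + s) = coset_sum h d e (of_nat c + s)"
      for c k
      using coset_sum_shift[OF zero, of h "of_nat c + s" k] by (simp add: algebra_simps)
    then show ?thesis
      by (simp add: coset_sum_def sum_distrib_right)
  qed
  also have "\<dots> = (\<Sum>x\<in>UNIV. h x * coset_sum h d e (x + s))"
    by (rule sum_UNIV_bit1_cosets[OF de, symmetric])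
  also have "\<dots> = (\<Sum>k<e. \<Sum>x\<in>UNIV. h x * h (x - (- (s + of_nat d * of_nat k))))"
    by (simp add: coset_sum_def sum_distrib_left algebra_simps sum.swap[of _ UNIV])
  finally show ?thesis
    by (simp add: autocorrelation_def)
qed

lemma sum_squared_eq_sum_autocorrelation:
  fixes h :: "'g::{finite, ab_group_add} \<Rightarrow> int"
  shows "(\<Sum>x\<in>UNIV. h x) ^ 2 = (\<Sum>s\<in>UNIV. autocorrelation h s)"
proof -
  have "(\<Sum>x\<in>UNIV. h x) ^ 2 = (\<Sum>x\<in>UNIV. \<Sum>y\<in>UNIV. h x * h y)"
    by (simp add: power2_eq_square sum_product)
  also have "\<dots> = (\<Sum>x\<in>UNIV. \<Sum>s\<in>UNIV. h x * h (x - s))"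
  proof (rule sum.cong[OF refl])
    fix x
    show "(\<Sum>y\<in>UNIV. h x * h y) = (\<Sum>s\<in>UNIV. h x * h (x - s))"
      by (rule sum.reindex_bij_witness[where i="\<lambda>s. x - s" and j="\<lambda>y. x - y"]) auto
  qed
  also have "\<dots> = (\<Sum>s\<in>UNIV. autocorrelation h s)"
    unfolding autocorrelation_def by (rule sum.swap)
  finally show ?thesis .
qed

lemma circulant_weighing_matrix_autocorrelation:
  fixes W :: "nat \<Rightarrow> nat \<Rightarrow> int"
  assumes "circulant_weighing_matrix CARD('n::finite bit1) k W"
  obtains f :: "'n::finite bit1 \<Rightarrow> int" where "\<And>x. f x \<in> {-1, 0, 1}"
    and "\<And>s. autocorrelation f s = (if s = 0 then int k else 0)"
proof
  let ?n = "CARD('n bit1)"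
  define f :: "'n bit1 \<Rightarrow> int" where "f x = W 0 (nat (Rep_bit1 x))" for x
  have f_of_nat: "f (of_nat i) = W 0 i" if "i < ?n" for i
    using that unfolding f_def by (simp add: bit1.of_nat_eq bit1.Abs_inverse)
  have circ: "W i j = W 0 ((j + ?n - i) mod ?n)" if "i < ?n" "j < ?n" for i j
    using assms that unfolding circulant_weighing_matrix_def circulant_def by blast
  show "f x \<in> {-1, 0, 1}" for x
  proof (rule bit1_of_nat_cases[of x])
    fix i assume "i < ?n" and "x = of_nat i"
    then show ?thesis
      using assms f_of_nat unfolding circulant_weighing_matrix_def by auto
  qed
  show "autocorrelation f s = (if s = 0 then int k else 0)" for s
  proof (rule bit1_of_nat_cases[of s])
    fix j assume j: "j < ?n" and s: "s = of_nat j"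
    have "autocorrelation f s = (\<Sum>i<?n. W 0 i * W j i)"
      unfolding autocorrelation_def s sum_UNIV_bit1
    proof (rule sum.cong[OF refl])
      fix i assume "i \<in> {..<?n}"
      then show "f (of_nat i) * f (of_nat i - of_nat j) = W 0 i * W j i"
        unfolding of_nat_diff_bit1[OF j] using circ[of j i] j by (simp add: f_of_nat)
    qed
    also have "\<dots> = (if j = 0 then int k else 0)"
      using assms j unfolding circulant_weighing_matrix_def by simp
    also have "(j = 0) = (s = 0)"
      using j of_nat_bit1_eq_iff[of j 0, where 'n = 'n] unfolding s by simp
    finally show ?thesis .
  qed
qed

section \<open>The case n = 143\<close>

lemma coset_value_cases:
  fixes c q r r' :: int
  assumes "q \<in> {-1, 0, 1}" "r \<in> {-1, 0, 1}" "r' \<in> {-1, 0, 1}"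
    and "c = q + 5 * (r + r')" and "c * c \<le> 27"
  shows "c \<in> {-5, -4, -1, 0, 1, 4, 5}"
  using assms by auto

lemma coset_value_cases_3_dvd:
  fixes c q r r' :: int
  assumes "q \<in> {-1, 0, 1}" "r \<in> {-1, 0, 1}" "r' \<in> {-1, 0, 1}"
    and "c = q + 5 * (r + r')" and "3 dvd c * c"
  shows "c \<in> {0, 6, -6} \<or> (c = 9 \<and> q = -1) \<or> (c = -9 \<and> q = 1)"
  using assms by auto

lemma coset_value_eq_0:
  fixes q r r' :: int
  assumes "q \<in> {-1, 0, 1}" "r \<in> {-1, 0, 1}" "r' \<in> {-1, 0, 1}" and "q + 5 * (r + r') = 0"
  shows "q = 0"
  using assms by auto

lemma coset_values_mod13_impossible:
  "\<forall>c1\<in>{-5, -4, -1, 0, 1, 4, 5}. \<forall>c2\<in>{-5, -4, -1, 0, 1, 4, 5}.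
    \<forall>c3\<in>{-5, -4, -1, 0, 1, 4, 5}. \<forall>c4\<in>{-5, -4, -1, 0, 1, 4, 5::int}.
      c1 * c1 + c2 * c2 + c3 * c3 + c4 * c4 \<noteq> 15 \<and>
      (c1 * c1 + c2 * c2 + c3 * c3 + c4 * c4 = 27 \<longrightarrow>
       (c1 + c2 + c3 + c4 = 3 \<or> c1 + c2 + c3 + c4 = -3) \<longrightarrow>
       2 * c1 * c2 + 2 * c1 * c3 + c2 * c3 + c2 * c2 + c2 * c4 + c4 * c4 + c1 * c4
         + 2 * c3 * c4 \<noteq> 0)"
  by code_simp

lemma coset_values_mod11_impossible:
  fixes \<sigma> x y :: int
  assumes "\<sigma> = 1 \<or> \<sigma> = -1" and "\<sigma> * \<sigma> + 5 * (x * x + y * y) = 81"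
    and "- \<sigma> + 5 * (x + y) = 9 * \<sigma>"
  shows False
proof -
  have bound: "z \<in> {-4, -3, -2, -1, 0, 1, 2, 3, 4}" if "z * z \<le> 4 * 4" for z :: int
  proof -
    have "\<bar>z\<bar> \<le> 4"
      using that by (metis abs_le_square_iff abs_numeral power2_eq_square)
    then show ?thesis
      by (simp add: abs_le_iff) presburger
  qed
  have squares: "x * x + y * y = 16"
    using assms(1,2) by auto
  then have "x * x \<le> 4 * 4" and "y * y \<le> 4 * 4"
    using zero_le_square[of x] zero_le_square[of y] by arith+
  moreover have "\<forall>x\<in>{-4, -3, -2, -1, 0, 1, 2, 3, 4::int}. \<forall>y\<in>{-4, -3, -2, -1, 0, 1, 2, 3, 4}.
      x * x + y * y = 16 \<longrightarrow> x + y \<noteq> 2 \<and> x + y \<noteq> -2"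
    by code_simp
  ultimately have "x + y \<noteq> 2 \<and> x + y \<noteq> -2"
    using bound squares by blast
  moreover have "x + y = 2 * \<sigma>"
    using assms(3) by arith
  ultimately show False
    using assms(1) by auto
qed

text \<open>
  \<open>v\<^sub>r\<close> stands for the value of an invariant sequence on the orbit of \<open>r\<close>; the \<open>c\<^sub>i\<close> and
  \<open>b\<^sub>j\<close> are its coset sums modulo 13 and modulo 11 (lemma \<open>coset_sums_143\<close> below).
\<close>

lemma no_integer_solution_143:
  fixes v0 v1 v2 v4 v5 v7 v10 v11 v13 v20 v22 v26 v29 v44 v77 :: int
  assumes vals: "v0 \<in> {-1, 0, 1}" "v1 \<in> {-1, 0, 1}" "v2 \<in> {-1, 0, 1}" "v4 \<in> {-1, 0, 1}"
    "v5 \<in> {-1, 0, 1}" "v7 \<in> {-1, 0, 1}" "v10 \<in> {-1, 0, 1}" "v11 \<in> {-1, 0, 1}"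
    "v13 \<in> {-1, 0, 1}" "v20 \<in> {-1, 0, 1}" "v22 \<in> {-1, 0, 1}" "v26 \<in> {-1, 0, 1}"
    "v29 \<in> {-1, 0, 1}" "v44 \<in> {-1, 0, 1}" "v77 \<in> {-1, 0, 1}"
  defines "c0 \<equiv> v0 + 5 * (v13 + v26)" and "c1 \<equiv> v22 + 5 * (v1 + v29)"
    and "c2 \<equiv> v44 + 5 * (v2 + v5)" and "c3 \<equiv> v77 + 5 * (v4 + v10)"
    and "c4 \<equiv> v11 + 5 * (v7 + v20)"
    and "b0 \<equiv> v0 + 3 * (v11 + v22 + v44 + v77)" and "bq \<equiv> v26 + 3 * (v1 + v4 + v5 + v20)"
    and "bn \<equiv> v13 + 3 * (v2 + v7 + v10 + v29)"
  assumes norm13: "c0 * c0 + 3 * (c1 * c1 + c2 * c2 + c3 * c3 + c4 * c4) = 81"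
    and shift13: "c0 * c1 + c0 * c3 + 2 * c1 * c2 + 2 * c1 * c3 + c2 * c3 + c2 * c2 + c2 * c4
      + c4 * c4 + c1 * c4 + 2 * c3 * c4 = 0"
    and norm11: "b0 * b0 + 5 * (bq * bq + bn * bn) = 81"
    and total: "(c0 + 3 * (c1 + c2 + c3 + c4)) ^ 2 = 81"
  shows False
proof -
  have squares: "c0 * c0 \<ge> 0" "c1 * c1 \<ge> 0" "c2 * c2 \<ge> 0" "c3 * c3 \<ge> 0" "c4 * c4 \<ge> 0"
    by simp_all
  have "c1 * c1 \<le> 27" "c2 * c2 \<le> 27" "c3 * c3 \<le> 27" "c4 * c4 \<le> 27"
    using norm13 squares by arith+
  then have c1: "c1 \<in> {-5, -4, -1, 0, 1, 4, 5}" and c2: "c2 \<in> {-5, -4, -1, 0, 1, 4, 5}"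
    and c3: "c3 \<in> {-5, -4, -1, 0, 1, 4, 5}" and c4: "c4 \<in> {-5, -4, -1, 0, 1, 4, 5}"
    using vals by (intro coset_value_cases; simp add: c1_def c2_def c3_def c4_def)+
  note mod13_impossible = coset_values_mod13_impossible[rule_format, OF c1 c2 c3 c4]
  have "c0 * c0 = 3 * (27 - (c1 * c1 + c2 * c2 + c3 * c3 + c4 * c4))"
    using norm13 by simp
  then have "c0 \<in> {0, 6, -6} \<or> (c0 = 9 \<and> v0 = -1) \<or> (c0 = -9 \<and> v0 = 1)"
    using vals by (intro coset_value_cases_3_dvd) (simp_all add: c0_def)
  then consider "c0 = 0" | "c0 = 6 \<or> c0 = -6" | \<sigma> where "\<sigma> = 1 \<or> \<sigma> = -1" "v0 = - \<sigma>" "c0 = 9 * \<sigma>"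
    by fastforce
  then show False
  proof cases
    case 1
    then have "(3 * (c1 + c2 + c3 + c4)) ^ 2 = 9 ^ 2"
      using total by simp
    then have "c1 + c2 + c3 + c4 = 3 \<or> c1 + c2 + c3 + c4 = -3"
      unfolding power2_eq_iff by arith
    then show False
      using mod13_impossible norm13 shift13 1 by simp
  next
    case 2
    then show False
      using mod13_impossible norm13 by auto
  next
    case (3 \<sigma>)
    then have "c1 * c1 + c2 * c2 + c3 * c3 + c4 * c4 = 0"
      using norm13 by auto
    then have "c1 * c1 = 0" "c2 * c2 = 0" "c3 * c3 = 0" "c4 * c4 = 0"
      using squares by arith+
    then have c_0: "c1 = 0" "c2 = 0" "c3 = 0" "c4 = 0"
      by simp_all
    then have "v22 = 0" "v44 = 0" "v77 = 0" "v11 = 0"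
      using coset_value_eq_0[of v22 v1 v29] coset_value_eq_0[of v44 v2 v5]
        coset_value_eq_0[of v77 v4 v10] coset_value_eq_0[of v11 v7 v20] vals
      by (simp_all add: c1_def c2_def c3_def c4_def)
    then have "b0 = - \<sigma>"
      using 3 by (simp add: b0_def)
    moreover have "c0 + 3 * (c1 + c2 + c3 + c4) = b0 + 5 * bq + 5 * bn"
      by (simp add: c0_def c1_def c2_def c3_def c4_def b0_def bq_def bn_def algebra_simps)
    ultimately show False
      using coset_values_mod11_impossible[of \<sigma> bq bn] norm11 c_0 3 by simp
  qed
qed

lemma of_int_mod_143: "(of_int (z mod 143) :: 143) = of_int z"
  by (simp add: bit1.of_int_eq)

text \<open>\<open>simp\<close> evaluates arithmetic on numerals of type \<open>143\<close> without reducing them modulo 143.\<close>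

lemma numeral_143_reduce:
  "(143::int) \<le> numeral w \<Longrightarrow> (numeral w :: 143) = of_int (numeral w mod 143)"
  by (metis of_int_mod_143 of_int_numeral)

text \<open>
  It excludes one representative of each
  of the 15 orbits of \<open>x \<mapsto> 3 * x\<close>, so that \<open>simp\<close>, rewriting with this rule, walks backwards
  along an orbit and stops at its representative.
\<close>

lemma mult3_invariant_orbit_step_143:
  fixes h :: "143 \<Rightarrow> int"
  assumes "\<And>x. h (3 * x) = h x"
    and "Rep_bit1 x \<notin> {0, 1, 2, 4, 5, 7, 10, 11, 13, 20, 22, 26, 29, 44, 77}"
  shows "h x = h (48 * x)"
  using assms(1)[of "48 * x"] by (simp add: mult.assoc[symmetric] numeral_143_reduce)

lemma coset_sums_143:
  fixes h :: "143 \<Rightarrow> int"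
  assumes "\<And>x. h (3 * x) = h x"
  defines "c0 \<equiv> h 0 + 5 * (h 13 + h 26)" and "c1 \<equiv> h 22 + 5 * (h 1 + h 29)"
    and "c2 \<equiv> h 44 + 5 * (h 2 + h 5)" and "c3 \<equiv> h 77 + 5 * (h 4 + h 10)"
    and "c4 \<equiv> h 11 + 5 * (h 7 + h 20)"
    and "b0 \<equiv> h 0 + 3 * (h 11 + h 22 + h 44 + h 77)"
    and "bq \<equiv> h 26 + 3 * (h 1 + h 4 + h 5 + h 20)" and "bn \<equiv> h 13 + 3 * (h 2 + h 7 + h 10 + h 29)"
  shows "coset_sum h 13 11 0 = c0" "coset_sum h 13 11 1 = c1" "coset_sum h 13 11 2 = c2"
    "coset_sum h 13 11 3 = c1" "coset_sum h 13 11 4 = c3" "coset_sum h 13 11 5 = c2"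
    "coset_sum h 13 11 6 = c2" "coset_sum h 13 11 7 = c4" "coset_sum h 13 11 8 = c4"
    "coset_sum h 13 11 9 = c1" "coset_sum h 13 11 10 = c3" "coset_sum h 13 11 11 = c4"
    "coset_sum h 13 11 12 = c3" "coset_sum h 13 11 13 = c0"
    and "coset_sum h 11 13 0 = b0" "coset_sum h 11 13 1 = bq" "coset_sum h 11 13 2 = bn"
    "coset_sum h 11 13 3 = bq" "coset_sum h 11 13 4 = bq" "coset_sum h 11 13 5 = bq"
    "coset_sum h 11 13 6 = bn" "coset_sum h 11 13 7 = bn" "coset_sum h 11 13 8 = bn"
    "coset_sum h 11 13 9 = bq" "coset_sum h 11 13 10 = bn"
  unfolding coset_sum_def assms(2-)
  by (simp_all add: lessThan_nat_numeral mult3_invariant_orbit_step_143[of h, OF assms(1)]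
      numeral_143_reduce bit1.Rep_numeral)

lemma no_mult3_invariant_sequence_143:
  fixes h :: "143 \<Rightarrow> int"
  assumes vals: "\<And>x. h x \<in> {-1, 0, 1}" and inv: "\<And>x. h (3 * x) = h x"
    and autocorr: "\<And>s. autocorrelation h s = (if s = 0 then 81 else 0)"
  shows False
proof -
  define c0 c1 c2 c3 c4 where "c0 = h 0 + 5 * (h 13 + h 26)" and "c1 = h 22 + 5 * (h 1 + h 29)"
    and "c2 = h 44 + 5 * (h 2 + h 5)" and "c3 = h 77 + 5 * (h 4 + h 10)"
    and "c4 = h 11 + 5 * (h 7 + h 20)"
  define b0 bq bn where "b0 = h 0 + 3 * (h 11 + h 22 + h 44 + h 77)"
    and "bq = h 26 + 3 * (h 1 + h 4 + h 5 + h 20)" and "bn = h 13 + 3 * (h 2 + h 7 + h 10 + h 29)"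
  note cosets = coset_sums_143[of h, OF inv,
      folded c0_def c1_def c2_def c3_def c4_def b0_def bq_def bn_def]
  have "c0 * c0 + 3 * (c1 * c1 + c2 * c2 + c3 * c3 + c4 * c4) = 81"
    using coset_sum_autocorrelation[of 13 11 h 0]
    by (simp add: autocorr lessThan_nat_numeral cosets numeral_143_reduce algebra_simps)
  moreover have "c0 * c1 + c0 * c3 + 2 * c1 * c2 + 2 * c1 * c3 + c2 * c3 + c2 * c2 + c2 * c4
      + c4 * c4 + c1 * c4 + 2 * c3 * c4 = 0"
    using coset_sum_autocorrelation[of 13 11 h 1]
    by (simp add: autocorr lessThan_nat_numeral cosets numeral_143_reduce algebra_simps)
  moreover have "b0 * b0 + 5 * (bq * bq + bn * bn) = 81"
    using coset_sum_autocorrelation[of 11 13 h 0]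
    by (simp add: autocorr lessThan_nat_numeral cosets numeral_143_reduce algebra_simps)
  moreover have "(c0 + 3 * (c1 + c2 + c3 + c4)) ^ 2 = 81"
  proof -
    have "(\<Sum>x\<in>UNIV. h x) = (\<Sum>c<13. coset_sum h 13 11 (of_nat c))"
      unfolding coset_sum_def by (rule sum_UNIV_bit1_cosets) simp
    also have "\<dots> = c0 + 3 * (c1 + c2 + c3 + c4)"
      by (simp add: lessThan_nat_numeral cosets)
    finally show ?thesis
      using sum_squared_eq_sum_autocorrelation[of h] by (simp add: autocorr)
  qed
  ultimately show False
    using vals unfolding c0_def c1_def c2_def c3_def c4_def b0_def bq_def bn_def
    by (intro no_integer_solution_143) simp_all
qed

theorem proposition4:
  shows "\<not> (\<exists>W. circulant_weighing_matrix 143 81 W)"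
proof
  assume "\<exists>W. circulant_weighing_matrix 143 81 W"
  then obtain W where "circulant_weighing_matrix CARD(143) 81 W"
    by auto
  then obtain f :: "143 \<Rightarrow> int" where vals: "\<And>x. f x \<in> {-1, 0, 1}"
    and autocorr: "\<And>s. autocorrelation f s = (if s = 0 then int 81 else 0)"
    by (rule circulant_weighing_matrix_autocorrelation) blast
  then have "autocorrelation f s = (if s = 0 then 3 ^ 4 else 0)" for s
    by simp
  then obtain t where t: "\<And>x. f (3 * x + t) = f (x + t)"
    using multiplier_3_translate[of 48 15 72 f 4] by (simp add: numeral_143_reduce) blast
  show False
    by (rule no_mult3_invariant_sequence_143[of "\<lambda>x. f (x + t)"])
      (use vals t autocorr in \<open>simp_all add: autocorrelation_translate\<close>)
qed

end
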